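(* Let $Z$ be a convex subset of a real vector space $V$ and let $y\in Z$. For all $x_1,x_2\in Z$ with $x_1\leq_C y$ and $x_2\leq_C y$, and all $0\leq s\leq 1$, $$\frac{1}{t_y\big(sx_1+(1-s)x_2\big)}\leq\frac{s}{t_y(x_1)}+\frac{1-s}{t_y(x_2)}.$$
   Context: For $x,y\in Z$ write $x\leq_C y$ if there exist $z\in Z$ and $0<t\leq 1$ with $y=tx+(1-t)z$. The weight function $t_y:Z\to[0,1]$ is defined by $t_y(x)=\sup\{0\leq t<1 : \frac{y-tx}{1-t}\in Z\}$. *)

theory Defs
  imports "HOL-Analysis.Analysis"
begin

definition leqC :: "'a::real_vector set \<Rightarrow> 'a \<Rightarrow> 'a \<Rightarrow> bool" where
  "leqC Z x y \<longleftrightarrow> (\<exists>z\<in>Z. \<exists>t::real. 0 < t \<and> t \<le> 1 \<and> y = t *\<^sub>R x + (1 - t) *\<^sub>R z)"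

definition tweight :: "'a::real_vector set \<Rightarrow> 'a \<Rightarrow> 'a \<Rightarrow> real" where
  "tweight Z y x = Sup {t::real. 0 \<le> t \<and> t < 1 \<and> (1 / (1 - t)) *\<^sub>R (y - t *\<^sub>R x) \<in> Z}"

end

theory Submission
  imports Defs
begin

text \<open>Write \<open>y = t x + (1 - t) w\<close> with \<open>w \<in> Z\<close> for an admissible weight \<open>t\<close>. If \<open>y = a x\<^sub>1 + (1 - a) w\<^sub>1\<close>
  and \<open>y = b x\<^sub>2 + (1 - b) w\<^sub>2\<close>, then for \<open>1/c = s/a + (1 - s)/b\<close> the point \<open>c (s x\<^sub>1 + (1 - s) x\<^sub>2)\<close>
  equals \<open>y\<close> minus a nonnegative combination of \<open>w\<^sub>1, w\<^sub>2\<close> of total mass \<open>1 - c\<close>; by convexity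
  \<open>c\<close> is an admissible weight for \<open>s x\<^sub>1 + (1 - s) x\<^sub>2\<close>. The admissible weights form an interval
  starting at \<open>0\<close>, so applying this to \<open>a = l t\<^sub>y(x\<^sub>1)\<close>, \<open>b = l t\<^sub>y(x\<^sub>2)\<close> and letting \<open>l \<rightarrow> 1\<close> gives
  the harmonic convexity of \<open>1/t\<^sub>y\<close>.\<close>

definition weight_set :: "'a::real_vector set \<Rightarrow> 'a \<Rightarrow> 'a \<Rightarrow> real set" where
  "weight_set Z y x = {t. 0 \<le> t \<and> t < 1 \<and> (1 / (1 - t)) *\<^sub>R (y - t *\<^sub>R x) \<in> Z}"

lemma tweight_eq_Sup_weight_set: "tweight Z y x = Sup (weight_set Z y x)"
  by (simp add: tweight_def weight_set_def)

lemma mem_weight_set_iff: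
  "t \<in> weight_set Z y x \<longleftrightarrow> 0 \<le> t \<and> t < 1 \<and> (\<exists>w\<in>Z. y = t *\<^sub>R x + (1 - t) *\<^sub>R w)"
proof -
  have "(1 / (1 - t)) *\<^sub>R (y - t *\<^sub>R x) = w \<longleftrightarrow> y = t *\<^sub>R x + (1 - t) *\<^sub>R w" if "t < 1" for w
    using that by (auto simp: vector_fraction_eq_iff diff_eq_eq add.commute)
  then show ?thesis
    unfolding weight_set_def by auto
qed

lemma bdd_above_weight_set: "bdd_above (weight_set Z y x)"
  by (rule bdd_aboveI[of _ 1]) (auto simp: weight_set_def)

lemma le_tweight: "t \<in> weight_set Z y x \<Longrightarrow> t \<le> tweight Z y x"
  by (simp add: tweight_eq_Sup_weight_set cSup_upper bdd_above_weight_set)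

lemma mem_weight_set_convex_combination:
  assumes "convex Z" "w1 \<in> Z" "w2 \<in> Z" "0 \<le> c" "c < 1" "0 \<le> m1" "0 \<le> m2" "m1 + m2 = 1 - c"
    and "y = c *\<^sub>R x + m1 *\<^sub>R w1 + m2 *\<^sub>R w2"
  shows "c \<in> weight_set Z y x"
proof -
  define \<mu> where "\<mu> = m1 / (1 - c)"
  have "0 \<le> \<mu>" "\<mu> \<le> 1" "1 - \<mu> = m2 / (1 - c)"
    using assms(5-8) by (auto simp: \<mu>_def field_simps)
  then have "\<mu> *\<^sub>R w1 + (1 - \<mu>) *\<^sub>R w2 \<in> Z"
    using convexD[OF assms(1-3)] by simp
  moreover have "y = c *\<^sub>R x + (1 - c) *\<^sub>R (\<mu> *\<^sub>R w1 + (1 - \<mu>) *\<^sub>R w2)"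
    using assms(5,9) \<open>1 - \<mu> = m2 / (1 - c)\<close> by (simp add: \<mu>_def scaleR_add_right)
  ultimately show ?thesis
    using assms(4,5) by (auto simp: mem_weight_set_iff)
qed

text \<open>Decreasing \<open>t\<close> to \<open>t'\<close> moves \<open>w\<close> towards \<open>y\<close>:
  \<open>y = t' x + (t'/t) (1 - t) w + (1 - t'/t) y\<close>.\<close>

lemma weight_set_downward_closed:
  assumes "convex Z" "y \<in> Z" "t \<in> weight_set Z y x" "0 \<le> t'" "t' \<le> t"
  shows "t' \<in> weight_set Z y x"
proof (cases "t' = t")
  case False
  from assms(3) obtain w where "w \<in> Z" "t < 1" and y: "y = t *\<^sub>R x + (1 - t) *\<^sub>R w"
    by (auto simp: mem_weight_set_iff)
  have "0 < t" using False assms(4,5) by simp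
  have "y = (t'/t) *\<^sub>R y + (1 - t'/t) *\<^sub>R y"
    by (simp flip: scaleR_add_left)
  also have "(t'/t) *\<^sub>R y = t' *\<^sub>R x + ((t'/t) * (1 - t)) *\<^sub>R w"
    using \<open>0 < t\<close> by (subst y) (simp add: scaleR_add_right)
  finally have y': "y = t' *\<^sub>R x + ((t'/t) * (1 - t)) *\<^sub>R w + (1 - t'/t) *\<^sub>R y" .
  have "(t'/t) * (1 - t) + (1 - t'/t) = 1 - t'"
    using \<open>0 < t\<close> by (simp add: field_simps)
  moreover have "0 \<le> (t'/t) * (1 - t)" "0 \<le> 1 - t'/t" "t' < 1"
    using \<open>0 < t\<close> \<open>t < 1\<close> assms(4,5) by simp_all
  ultimately show ?thesis
    using mem_weight_set_convex_combination[OF assms(1) \<open>w \<in> Z\<close> assms(2) assms(4) _ _ _ _ y']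
    by simp
qed (use assms in simp)

lemma mem_weight_set_less_tweight:
  assumes "convex Z" "y \<in> Z" "0 \<le> a" "a < tweight Z y x"
  shows "a \<in> weight_set Z y x"
proof -
  have "0 \<in> weight_set Z y x"
    using assms(2) by (simp add: weight_set_def)
  then obtain t where "t \<in> weight_set Z y x" "a < t"
    using assms(4) less_cSup_iff[OF _ bdd_above_weight_set, of Z y x a]
    unfolding tweight_eq_Sup_weight_set by blast
  then show ?thesis
    using weight_set_downward_closed[OF assms(1,2)] assms(3) by simp
qed

lemma tweight_pos:
  assumes "y \<in> Z" "leqC Z x y"
  shows "0 < tweight Z y x"
proof -
  obtain z t where "z \<in> Z" "0 < t" "t \<le> 1" and y: "y = t *\<^sub>R x + (1 - t) *\<^sub>R z"
    using assms(2) by (auto simp: leqC_def)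
  have "\<exists>\<tau>>0. \<tau> \<in> weight_set Z y x"
  proof (cases "t = 1")
    case True
    then have "y = x"
      using y by simp
    have "(1/2) *\<^sub>R x + (1 - 1/2) *\<^sub>R x = x"
      by (simp flip: scaleR_add_left)
    then have "1/2 \<in> weight_set Z y x"
      unfolding mem_weight_set_iff using \<open>y = x\<close> assms(1) by (auto intro!: bexI[of _ x])
    then show ?thesis
      by (intro exI[of _ "1/2"]) simp
  next
    case False
    with \<open>z \<in> Z\<close> \<open>0 < t\<close> \<open>t \<le> 1\<close> y show ?thesis
      by (auto simp: mem_weight_set_iff)
  qed
  then show ?thesis
    using le_tweight by fastforce
qed

lemma harmonic_mean_mem_weight_set:
  assumes "convex Z" "a \<in> weight_set Z y x1" "b \<in> weight_set Z y x2" "0 < a" "0 < b"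
    and "0 \<le> s" "s \<le> 1"
  shows "1 / (s / a + (1 - s) / b) \<in> weight_set Z y (s *\<^sub>R x1 + (1 - s) *\<^sub>R x2)"
proof -
  obtain w1 w2 where "w1 \<in> Z" "w2 \<in> Z" "a < 1" "b < 1"
    and y1: "y = a *\<^sub>R x1 + (1 - a) *\<^sub>R w1" and y2: "y = b *\<^sub>R x2 + (1 - b) *\<^sub>R w2"
    using assms(2,3) by (auto simp: mem_weight_set_iff)
  define H where "H = s / a + (1 - s) / b"
  define c where "c = 1 / H"
  define m1 where "m1 = c * s * (1 - a) / a"
  define m2 where "m2 = c * (1 - s) * (1 - b) / b"
  have "s \<le> s / a" "1 - s \<le> (1 - s) / b"
    using assms(4-7) \<open>a < 1\<close> \<open>b < 1\<close> by (simp_all add: le_divide_eq mult_left_le)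
  moreover have "s < s / a \<or> 1 - s < (1 - s) / b"
    using assms(4-7) \<open>a < 1\<close> \<open>b < 1\<close> by (cases "s = 0") (simp_all add: less_divide_eq)
  ultimately have "1 < H"
    unfolding H_def by linarith
  then have "0 < c" "c < 1"
    by (simp_all add: c_def)
  have "c * s / a + c * (1 - s) / b = c * H"
    by (simp add: H_def distrib_left)
  with \<open>1 < H\<close> have c_sum: "c * s / a + c * (1 - s) / b = 1"
    by (simp add: c_def)
  have "y = (c * s / a) *\<^sub>R y + (c * (1 - s) / b) *\<^sub>R y"
    using c_sum by (simp flip: scaleR_add_left)
  also have "(c * s / a) *\<^sub>R y = (c * s) *\<^sub>R x1 + m1 *\<^sub>R w1"
    using assms(4) by (subst y1) (simp add: scaleR_add_right m1_def)
  also have "(c * (1 - s) / b) *\<^sub>R y = (c * (1 - s)) *\<^sub>R x2 + m2 *\<^sub>R w2"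
    using assms(5) by (subst y2) (simp add: scaleR_add_right m2_def)
  finally have "y = c *\<^sub>R (s *\<^sub>R x1 + (1 - s) *\<^sub>R x2) + m1 *\<^sub>R w1 + m2 *\<^sub>R w2"
    by (simp add: scaleR_add_right)
  moreover have "m1 + m2 = 1 - c"
    using c_sum assms(4,5) by (simp add: m1_def m2_def field_simps)
  moreover have "0 \<le> m1" "0 \<le> m2"
    using \<open>0 < c\<close> assms(4-7) \<open>a < 1\<close> \<open>b < 1\<close> by (simp_all add: m1_def m2_def)
  ultimately show ?thesis
    using mem_weight_set_convex_combination[OF assms(1) \<open>w1 \<in> Z\<close> \<open>w2 \<in> Z\<close>] \<open>0 < c\<close> \<open>c < 1\<close>
    by (simp add: c_def H_def)
qed

lemma harmonic_mean_tweight_le: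
  assumes "convex Z" "y \<in> Z" "0 < tweight Z y x1" "0 < tweight Z y x2" "0 \<le> s" "s \<le> 1"
  shows "1 / (s / tweight Z y x1 + (1 - s) / tweight Z y x2)
           \<le> tweight Z y (s *\<^sub>R x1 + (1 - s) *\<^sub>R x2)"
proof (rule field_le_mult_one_interval)
  fix l :: real
  assume "0 < l" "l < 1"
  let ?t1 = "tweight Z y x1" and ?t2 = "tweight Z y x2"
  have "l * ?t1 \<in> weight_set Z y x1" "l * ?t2 \<in> weight_set Z y x2"
    using mem_weight_set_less_tweight[OF assms(1,2)] assms(3,4) \<open>0 < l\<close> \<open>l < 1\<close> by simp_all
  then have "1 / (s / (l * ?t1) + (1 - s) / (l * ?t2))
               \<in> weight_set Z y (s *\<^sub>R x1 + (1 - s) *\<^sub>R x2)"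
    using assms(3,4) \<open>0 < l\<close>
    by (intro harmonic_mean_mem_weight_set[OF assms(1) _ _ _ _ assms(5,6)]) simp_all
  moreover have "1 / (s / (l * ?t1) + (1 - s) / (l * ?t2)) = l * (1 / (s / ?t1 + (1 - s) / ?t2))"
    using assms(3,4) \<open>0 < l\<close> by (simp add: field_simps)
  ultimately show "l * (1 / (s / ?t1 + (1 - s) / ?t2)) \<le> tweight Z y (s *\<^sub>R x1 + (1 - s) *\<^sub>R x2)"
    by (metis le_tweight)
qed

theorem lemma1:
  fixes Z :: "'a::real_vector set" and y x1 x2 :: 'a and s :: real
  assumes "convex Z" and "y \<in> Z" and "x1 \<in> Z" and "x2 \<in> Z"
    and "leqC Z x1 y" and "leqC Z x2 y"
    and "0 \<le> s" and "s \<le> 1"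
  shows "1 / tweight Z y (s *\<^sub>R x1 + (1 - s) *\<^sub>R x2)
           \<le> s / tweight Z y x1 + (1 - s) / tweight Z y x2"
proof -
  define H where "H = s / tweight Z y x1 + (1 - s) / tweight Z y x2"
  define T where "T = tweight Z y (s *\<^sub>R x1 + (1 - s) *\<^sub>R x2)"
  have t1: "0 < tweight Z y x1" and t2: "0 < tweight Z y x2"
    using tweight_pos assms(2,5,6) by auto
  then have "0 < H"
    using assms(7,8) by (cases "s = 0") (auto simp: H_def add_pos_nonneg)
  moreover have "1 / H \<le> T"
    unfolding H_def T_def by (rule harmonic_mean_tweight_le[OF assms(1,2) t1 t2 assms(7,8)])
  ultimately have "0 < T" "1 \<le> T * H"
    by (auto simp: divide_le_eq intro: less_le_trans[of 0 "1 / H"])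
  then have "1 / T \<le> H"
    by (simp add: divide_le_eq mult.commute)
  then show ?thesis
    by (simp add: T_def H_def)
qed

end
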